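(* Let $\psi,\phi\in \mathbf{\Psi}_n$, $m:=\min_{t\in\Omega_n}\frac{\psi(t)}{\phi(t)}$, $M:=\max_{t\in\Omega_n}\frac{\psi(t)}{\phi(t)}$, and suppose $C_{\rm NJ}(|\!|\!|\cdot|\!|\!|_\phi)=C_{\rm NJ}(|\!|\!|\cdot|\!|\!|_{\phi^*})=1$. Then: (i) if $\psi\ge\phi$, then $C_{\rm NJ}(|\!|\!|\cdot|\!|\!|_\psi)\le M^2$ and $C_{\rm NJ}(|\!|\!|\cdot|\!|\!|_{\psi^*})\le M^2$; (ii) if $\psi\le\phi$, then $C_{\rm NJ}(|\!|\!|\cdot|\!|\!|_\psi)\le\frac{1}{m^2}$ and $C_{\rm NJ}(|\!|\!|\cdot|\!|\!|_{\psi^*})\le\frac{1}{m^2}$; (iii) if $n=2$, then the inequalities in (i) and (ii) hold as equalities.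
   Context: Let $(X,\|\cdot\|)$ be a normed vector space, $n\ge2$. $\Omega_n:=\{t\in\mathbb{R}^n\mid t_i\ge0,\ \sum_i t_i=1\}$, $\Omega_n^\circ:=\{t\in\Omega_n\mid t_i<1\ \forall i\}$. $\mathbf{\Psi}_n$ is the class of convex continuous $\psi:\Omega_n\to\mathbb{R}$ with (B1) $\psi(\mathbf{e}_i)=1$ for all standard unit vectors $\mathbf{e}_i$ and (B2) $\psi(t)\ge(1-t_i)\psi\big(\frac{t_1}{1-t_i},\ldots,\frac{t_{i-1}}{1-t_i},0,\frac{t_{i+1}}{1-t_i},\ldots,\frac{t_n}{1-t_i}\big)$ for all $t\in\Omega_n^\circ$, $i=1,\ldots,n$. For $\psi\in\mathbf{\Psi}_n$, $|\!|\!|x|\!|\!|_\psi:=\big(\sum_{i}\|x_i\|\big)\,\psi\big(\frac{\|x_1\|}{\sum_{i}\|x_i\|},\ldots,\frac{\|x_n\|}{\sum_{i}\|x_i\|}\big)$ for $0\ne x\in X^n$, $|\!|\!|0|\!|\!|_\psi:=0$; $\psi^*(s):=\max_{t\in\Omega_n}\frac{\langle t,s\rangle}{\psi(t)}$ and $|\!|\!|\cdot|\!|\!|_{\psi^*}$ is the dual norm of $|\!|\!|\cdot|\!|\!|_\psi$. $\psi\ge\phi$ means pointwise on $\Omega_n$. For a norm $N$ on a vector space $Y$, $C_{\rm NJ}(N):=\sup\Big\{\frac{N(x+y)^2+N(x-y)^2}{2(N(x)^2+N(y)^2)}\ \Big|\ x,y\in Y,\ N(x)+N(y)>0\Big\}$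 (von Neumann–Jordan constant). *)

theory Defs
  imports "HOL-Analysis.Analysis"
begin

text \<open>The simplex Omega_n, indexed by a finite type 'n with CARD('n) = n.\<close>
definition Omega :: "(real^'n::finite) set" where
  "Omega = {t. (\<forall>i. 0 \<le> t$i) \<and> (\<Sum>i\<in>UNIV. t$i) = 1}"

definition Omega_int :: "(real^'n::finite) set" where
  "Omega_int = {t \<in> Omega. \<forall>i. t$i < 1}"

definition Psi :: "((real^'n::finite) \<Rightarrow> real) set" where
  "Psi = {psi. convex_on Omega psi \<and> continuous_on Omega psi
     \<and> (\<forall>i. psi (axis i 1) = 1)
     \<and> (\<forall>t\<in>Omega_int. \<forall>i.
          psi t \<ge> (1 - t$i) * psi (\<chi> j. if j = i then 0 else t$j / (1 - t$i)))}"

definition psi_norm :: "((real^'n::finite) \<Rightarrow> real) \<Rightarrow> ('a::real_normed_vector)^'n \<Rightarrow> real" where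
  "psi_norm psi x = (if x = 0 then 0 else
     (\<Sum>i\<in>UNIV. norm (x$i)) * psi (\<chi> i. norm (x$i) / (\<Sum>j\<in>UNIV. norm (x$j))))"

text \<open>The dual function psi^* (the max is attained; written as a supremum).\<close>
definition psi_star :: "((real^'n::finite) \<Rightarrow> real) \<Rightarrow> (real^'n) \<Rightarrow> real" where
  "psi_star psi s = (SUP t\<in>Omega. (t \<bullet> s) / psi t)"

definition CNJ :: "('b::ab_group_add \<Rightarrow> real) \<Rightarrow> real" where
  "CNJ N = Sup {((N (x + y))^2 + (N (x - y))^2) / (2 * ((N x)^2 + (N y)^2)) | x y. N x + N y > 0}"

end

theory Submission
  imports Defs
begin

text \<open>If \<open>a \<phi> \<le> \<psi> \<le> b \<phi>\<close> on the simplex, then \<open>a \<parallel>x\<parallel>\<^sub>\<phi> \<le> \<parallel>x\<parallel>\<^sub>\<psi> \<le> b \<parallel>x\<parallel>\<^sub>\<phi>\<close>, and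
  dually \<open>\<parallel>x\<parallel>\<^sub>\<psi>\<^sub>*\<close> lies between \<open>\<parallel>x\<parallel>\<^sub>\<phi>\<^sub>* / b\<close> and \<open>\<parallel>x\<parallel>\<^sub>\<phi>\<^sub>* / a\<close>. For norms that are equivalent
  with ratio \<open>b / a\<close> the von Neumann--Jordan constants differ at most by the factor \<open>(b / a)\<^sup>2\<close>;
  the choices \<open>(a, b) = (1, M)\<close> and \<open>(a, b) = (m, 1)\<close> give (i) and (ii).

  For \<open>n = 2\<close>, a point \<open>t\<close> of the simplex and a unit vector \<open>e\<close>, the pairs \<open>(t\<^sub>1 e, 0), (0, t\<^sub>2 e)\<close>
  and \<open>(t\<^sub>1 e, t\<^sub>2 e), (t\<^sub>1 e, -t\<^sub>2 e)\<close> show that \<open>C\<^sub>N\<^sub>J(\<parallel>\<cdot>\<parallel>\<^sub>F)\<close> is at least \<open>(F t / \<bar>t\<bar>)\<^sup>2\<close> and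
  \<open>(\<bar>t\<bar> / F t)\<^sup>2\<close>, where \<open>\<bar>t\<bar>\<close> is the Euclidean norm. For \<open>\<phi>\<close> this forces \<open>\<phi> = \<bar>\<cdot>\<bar>\<close> on the
  simplex, and for \<open>\<psi>\<close> and \<open>\<psi>\<^sup>*\<close> at the points where \<open>\<psi> / \<bar>\<cdot>\<bar>\<close> is extremal it yields the
  reverse inequalities. The one non-obvious estimate is \<open>\<psi>\<^sup>*(t\<^sub>0) \<le> \<bar>t\<^sub>0\<bar>\<^sup>2 / \<psi>(t\<^sub>0)\<close> at a maximiser
  \<open>t\<^sub>0\<close> of \<open>\<psi> / \<bar>\<cdot>\<bar>\<close>: the convex function \<open>\<psi>\<close> lies below \<open>M \<bar>\<cdot>\<bar>\<close> and touches it at \<open>t\<^sub>0\<close>, so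
  it is supported there by the tangent functional \<open>M \<langle>\<cdot>, t\<^sub>0\<rangle> / \<bar>t\<^sub>0\<bar>\<close> of \<open>M \<bar>\<cdot>\<bar>\<close>.\<close>

section \<open>Von Neumann--Jordan ratios\<close>

text \<open>\<^const>\<open>CNJ\<close> is a supremum of reals, which carries no information unless the set of
  ratios is bounded above; this is why \<^const>\<open>bdd_above\<close> hypotheses appear below.\<close>

definition NJ_ratio :: "('b::ab_group_add \<Rightarrow> real) \<Rightarrow> 'b \<Rightarrow> 'b \<Rightarrow> real" where
  "NJ_ratio N x y = ((N (x + y))^2 + (N (x - y))^2) / (2 * ((N x)^2 + (N y)^2))"

definition NJ_ratios :: "('b::ab_group_add \<Rightarrow> real) \<Rightarrow> real set" where
  "NJ_ratios N = {NJ_ratio N x y | x y. 0 < N x + N y}"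

lemma CNJ_eq_Sup_NJ_ratios: "CNJ N = Sup (NJ_ratios N)"
  by (simp add: CNJ_def NJ_ratios_def NJ_ratio_def)

lemma NJ_ratio_le_CNJ:
  assumes "bdd_above (NJ_ratios N)" "0 < N x + N y"
  shows "NJ_ratio N x y \<le> CNJ N"
  unfolding CNJ_eq_Sup_NJ_ratios by (rule cSup_upper) (use assms in \<open>auto simp: NJ_ratios_def\<close>)

lemma bdd_above_NJ_ratiosI:
  assumes "\<And>x y. 0 < N x + N y \<Longrightarrow> NJ_ratio N x y \<le> C"
  shows "bdd_above (NJ_ratios N)"
  using assms by (auto simp: NJ_ratios_def intro!: bdd_aboveI)

lemma CNJ_le:
  assumes "0 < N z" "\<And>x y. 0 < N x + N y \<Longrightarrow> NJ_ratio N x y \<le> C"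
  shows "CNJ N \<le> C"
proof -
  have "NJ_ratio N z z \<in> NJ_ratios N" using assms(1) unfolding NJ_ratios_def by force
  then have "NJ_ratios N \<noteq> {}" by blast
  then show ?thesis
    unfolding CNJ_eq_Sup_NJ_ratios by (rule cSup_least) (use assms(2) in \<open>auto simp: NJ_ratios_def\<close>)
qed

lemma NJ_ratio_le_2:
  assumes nonneg: "\<And>x. 0 \<le> N x" and add: "\<And>x y. N (x + y) \<le> N x + N y"
    and minus: "\<And>x. N (- x) = N x"
  shows "NJ_ratio N x y \<le> 2"
proof -
  have "N (x - y) \<le> N x + N y" using add[of x "- y"] minus[of y] by simp
  then have "(N (x - y))^2 \<le> (N x + N y)^2" by (rule power_mono[OF _ nonneg])
  moreover have "(N (x + y))^2 \<le> (N x + N y)^2" by (rule power_mono[OF add nonneg])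
  ultimately have "(N (x + y))^2 + (N (x - y))^2 \<le> 2 * (N x + N y)^2" by simp
  also have "\<dots> \<le> 2 * (2 * ((N x)^2 + (N y)^2))"
    using sum_squares_ge_zero[of "N x - N y" 0] by (simp add: power2_eq_square algebra_simps)
  finally have num: "(N (x + y))^2 + (N (x - y))^2 \<le> 2 * (2 * ((N x)^2 + (N y)^2))" .
  show ?thesis
  proof (cases "(N x)^2 + (N y)^2 = 0")
    case False
    then have "0 < 2 * ((N x)^2 + (N y)^2)" by (metis add_nonneg_nonneg order_less_le zero_le_power2 mult_pos_pos zero_less_numeral)
    then show ?thesis using num unfolding NJ_ratio_def by (simp add: pos_divide_le_eq)
  qed (simp add: NJ_ratio_def)
qed

lemma NJ_ratio_equiv_le:
  assumes nonneg: "\<And>x. 0 \<le> P x" and lower: "\<And>x. a * P x \<le> N x" and upper: "\<And>x. N x \<le> b * P x"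
    and a: "0 < a"
  shows "NJ_ratio N x y \<le> (b / a)^2 * NJ_ratio P x y"
proof (cases "(P x)^2 + (P y)^2 = 0")
  case True
  then have "P x = 0" "P y = 0" using nonneg by (simp_all add: add_nonneg_eq_0_iff)
  then have "N x = 0" "N y = 0" using lower[of x] upper[of x] lower[of y] upper[of y] by simp_all
  then show ?thesis by (simp add: NJ_ratio_def)
next
  case False
  have N0: "0 \<le> N z" for z using lower[of z] mult_nonneg_nonneg[OF less_imp_le[OF a] nonneg[of z]] by linarith
  have "(N z)^2 \<le> b^2 * (P z)^2" for z
    using power_mono[OF upper N0] by (simp add: power_mult_distrib)
  then have num: "(N (x + y))^2 + (N (x - y))^2 \<le> b^2 * ((P (x + y))^2 + (P (x - y))^2)"
    by (simp add: distrib_left add_mono)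
  have "a^2 * (P z)^2 \<le> (N z)^2" for z
    using power_mono[OF lower] a nonneg[of z] by (simp add: power_mult_distrib)
  then have den: "a^2 * ((P x)^2 + (P y)^2) \<le> (N x)^2 + (N y)^2"
    by (simp add: distrib_left add_mono)
  have D: "0 < (P x)^2 + (P y)^2" using False by (metis add_nonneg_nonneg order_less_le zero_le_power2)
  have "NJ_ratio N x y \<le> b^2 * ((P (x + y))^2 + (P (x - y))^2) / (2 * (a^2 * ((P x)^2 + (P y)^2)))"
    unfolding NJ_ratio_def using num den D a by (intro frac_le) auto
  also have "\<dots> = (b / a)^2 * NJ_ratio P x y"
    unfolding NJ_ratio_def using a by (simp add: field_simps power2_eq_square)
  finally show ?thesis .
qed

lemma CNJ_le_equiv:
  assumes nonneg: "\<And>x. 0 \<le> P x" and lower: "\<And>x. a * P x \<le> N x" and upper: "\<And>x. N x \<le> b * P x"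
    and a: "0 < a" and bdd: "bdd_above (NJ_ratios P)" and z: "0 < N z"
  shows "CNJ N \<le> (b / a)^2 * CNJ P"
proof (rule CNJ_le[where N = N and z = z])
  show "0 < N z" by (rule z)
next
  fix x y assume pos: "0 < N x + N y"
  have "0 < P x + P y"
  proof (rule ccontr)
    assume "\<not> 0 < P x + P y"
    then have "P x = 0" "P y = 0" using nonneg[of x] nonneg[of y] by auto
    then show False using upper[of x] upper[of y] pos by simp
  qed
  then have "NJ_ratio P x y \<le> CNJ P" by (rule NJ_ratio_le_CNJ[OF bdd])
  then have "(b / a)^2 * NJ_ratio P x y \<le> (b / a)^2 * CNJ P" by (simp add: mult_left_mono)
  then show "NJ_ratio N x y \<le> (b / a)^2 * CNJ P"
    using NJ_ratio_equiv_le[where P = P and N = N, OF nonneg lower upper a, of x y] by linarith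
qed

section \<open>Attained extrema and convex functions below a norm\<close>

lemma continuous_attains_SUP:
  fixes f :: "'b::topological_space \<Rightarrow> real"
  assumes "compact S" "S \<noteq> {}" "continuous_on S f"
  obtains t0 where "t0 \<in> S" "(SUP t\<in>S. f t) = f t0" "\<And>t. t \<in> S \<Longrightarrow> f t \<le> f t0"
proof -
  obtain t0 where "t0 \<in> S" "\<forall>t\<in>S. f t \<le> f t0" using continuous_attains_sup[OF assms] by blast
  moreover from this have "(SUP t\<in>S. f t) = f t0" by (intro cSup_eq_maximum) auto
  ultimately show ?thesis using that by blast
qed

lemma continuous_attains_INF:
  fixes f :: "'b::topological_space \<Rightarrow> real"
  assumes "compact S" "S \<noteq> {}" "continuous_on S f"
  obtains t0 where "t0 \<in> S" "(INF t\<in>S. f t) = f t0" "\<And>t. t \<in> S \<Longrightarrow> f t0 \<le> f t"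
proof -
  obtain t0 where "t0 \<in> S" "\<forall>t\<in>S. f t0 \<le> f t" using continuous_attains_inf[OF assms] by blast
  moreover from this have "(INF t\<in>S. f t) = f t0" by (intro cInf_eq_minimum) auto
  ultimately show ?thesis using that by blast
qed

lemma norm_mult_le_inner_plus:
  fixes u v :: "'v::real_inner"
  shows "norm u * norm v \<le> u \<bullet> v + (norm (u - v))^2 / 2"
proof -
  have "(norm (u - v))^2 = (norm u)^2 - 2 * (u \<bullet> v) + (norm v)^2"
    by (simp add: power2_norm_eq_inner inner_diff inner_commute)
  moreover have "2 * (norm u * norm v) \<le> (norm u)^2 + (norm v)^2"
    using sum_squares_ge_zero[of "norm u - norm v" 0] by (simp add: power2_eq_square algebra_simps)
  ultimately show ?thesis by linarith
qed

lemma convex_on_extrapolate: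
  assumes convex: "convex_on S g" and t1: "t1 \<in> S" and ext: "t0 + h *\<^sub>R (t0 - t1) \<in> S" and h: "0 < h"
  shows "(1 + h) * g t0 \<le> g (t0 + h *\<^sub>R (t0 - t1)) + h * g t1"
proof -
  define t2 where "t2 = t0 + h *\<^sub>R (t0 - t1)"
  have "(1 + h) *\<^sub>R ((1 - h / (1 + h)) *\<^sub>R t2 + (h / (1 + h)) *\<^sub>R t1)
      = ((1 + h) * (1 - h / (1 + h))) *\<^sub>R t2 + ((1 + h) * (h / (1 + h))) *\<^sub>R t1"
    by (simp add: scaleR_add_right)
  also have "\<dots> = (1 + h) *\<^sub>R t0" using h by (simp add: t2_def field_simps algebra_simps)
  finally have "t0 = (1 - h / (1 + h)) *\<^sub>R t2 + (h / (1 + h)) *\<^sub>R t1" using h by simp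
  then have "g t0 \<le> (1 - h / (1 + h)) * g t2 + (h / (1 + h)) * g t1"
    using convex_onD[OF convex, of "h / (1 + h)" t2 t1] t1 ext h by (simp add: t2_def)
  also have "\<dots> = (g t2 + h * g t1) / (1 + h)"
  proof -
    have "1 - h / (1 + h) = 1 / (1 + h)" using h by (simp add: field_simps)
    then show ?thesis by (simp add: add_divide_distrib)
  qed
  finally show ?thesis using h by (simp add: t2_def pos_le_divide_eq mult.commute)
qed

lemma convex_on_below_norm_support:
  fixes g :: "'v::real_inner \<Rightarrow> real"
  assumes convex: "convex_on S g" and M: "0 \<le> M"
    and below: "\<And>t. t \<in> S \<Longrightarrow> g t \<le> M * norm t" and touch: "g t0 = M * norm t0"
    and t1: "t1 \<in> S" and \<delta>: "0 < \<delta>" and extend: "\<And>h. 0 < h \<Longrightarrow> h \<le> \<delta> \<Longrightarrow> t0 + h *\<^sub>R (t0 - t1) \<in> S"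
  shows "M * (t1 \<bullet> t0) \<le> norm t0 * g t1"
proof -
  define c where "c = M * (norm (t0 - t1))^2 / 2"
  have c: "0 \<le> c" using M by (simp add: c_def)
  \<comment> \<open>Up to an error \<open>h * c\<close>, the norm is linear on the short segment from \<open>t0\<close> to
    \<open>t0 + h (t0 - t1)\<close>, while \<open>g\<close> is convex along the line through \<open>t1\<close> and \<open>t0\<close>.\<close>
  have approx: "M * (t1 \<bullet> t0) \<le> norm t0 * g t1 + h * c" if h: "0 < h" "h \<le> \<delta>" for h
  proof -
    define t2 where "t2 = t0 + h *\<^sub>R (t0 - t1)"
    have "(1 + h) * M * norm t0 \<le> M * norm t2 + h * g t1"
      using convex_on_extrapolate[OF convex t1 extend[OF h] h(1)] below[OF extend[OF h]] touch
      by (simp add: t2_def)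
    from mult_right_mono[OF this norm_ge_zero[of t0]]
    have "(1 + h) * M * (norm t0)^2 \<le> M * (norm t2 * norm t0) + h * (norm t0 * g t1)"
      by (simp add: power2_eq_square algebra_simps)
    also have "M * (norm t2 * norm t0) \<le> M * (t2 \<bullet> t0 + (norm (t2 - t0))^2 / 2)"
      by (rule mult_left_mono[OF norm_mult_le_inner_plus M])
    also have "t2 \<bullet> t0 = (1 + h) * (norm t0)^2 - h * (t1 \<bullet> t0)"
      by (simp add: t2_def inner_add_left inner_diff_left power2_norm_eq_inner algebra_simps)
    also have "(norm (t2 - t0))^2 = h^2 * (norm (t0 - t1))^2"
      using h by (simp add: t2_def power_mult_distrib)
    finally have "h * (M * (t1 \<bullet> t0)) \<le> h * (norm t0 * g t1 + h * c)"
      by (simp add: c_def power2_eq_square algebra_simps)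
    then show ?thesis using h by simp
  qed
  show ?thesis
  proof (rule field_le_epsilon)
    fix \<epsilon> :: real assume \<epsilon>: "0 < \<epsilon>"
    define h where "h = min \<delta> (\<epsilon> / (c + 1))"
    have h: "0 < h" "h \<le> \<delta>" using \<delta> \<epsilon> c by (simp_all add: h_def)
    have "h * c \<le> \<epsilon> / (c + 1) * c" using h c by (intro mult_right_mono) (simp_all add: h_def)
    also have "\<dots> \<le> \<epsilon>" using \<epsilon> c by (simp add: field_simps)
    finally show "M * (t1 \<bullet> t0) \<le> norm t0 * g t1 + \<epsilon>" using approx[OF h] by simp
  qed
qed

section \<open>The simplex\<close>

lemma Omega_component_nonneg: "t \<in> Omega \<Longrightarrow> 0 \<le> t$i"
  by (simp add: Omega_def)

lemma Omega_sum: "t \<in> Omega \<Longrightarrow> (\<Sum>i\<in>UNIV. t$i) = 1"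
  by (simp add: Omega_def)

lemma Omega_two_components_le:
  assumes "t \<in> Omega" "i \<noteq> k"
  shows "t$i + t$k \<le> 1"
proof -
  have "(\<Sum>l\<in>{i, k}. t$l) \<le> (\<Sum>l\<in>UNIV. t$l)"
    by (rule sum_mono2) (use assms in \<open>auto simp: Omega_def\<close>)
  then show ?thesis using assms by (simp add: Omega_def)
qed

lemma Omega_component_le_1:
  assumes "t \<in> Omega" shows "t$i \<le> 1"
proof -
  have "t$i \<le> (\<Sum>k\<in>UNIV. t$k)"
    by (rule member_le_sum) (use assms in \<open>auto simp: Omega_def\<close>)
  then show ?thesis using assms by (simp add: Omega_def)
qed

lemma axis_in_Omega: "(axis i 1 :: real^'n::finite) \<in> Omega"
  by (auto simp: Omega_def axis_def sum.delta)

lemma Omega_nonempty: "Omega \<noteq> {}"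
  using axis_in_Omega by blast

lemma Omega_nonzero: "t \<in> Omega \<Longrightarrow> t \<noteq> 0"
  by (auto simp: Omega_def)

lemma Omega_eq_axis:
  assumes "t \<in> Omega" "t$i = 1"
  shows "t = axis i 1"
proof -
  have "t$k = 0" if "k \<noteq> i" for k
    using Omega_two_components_le[OF assms(1) that] Omega_component_nonneg[OF assms(1), of k] assms(2)
    by simp
  then show ?thesis using assms(2) by (auto simp: axis_def vec_eq_iff)
qed

lemma Omega_ex_component_ge:
  assumes "t \<in> (Omega :: (real^'n::finite) set)"
  shows "\<exists>j. 1 / real CARD('n) \<le> t$j"
proof (rule ccontr)
  assume "\<not> ?thesis"
  then have "(\<Sum>i\<in>UNIV. t$i) < (\<Sum>i\<in>(UNIV::'n set). 1 / real CARD('n))"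
    by (intro sum_strict_mono) (auto simp: not_le)
  then show False using Omega_sum[OF assms] by simp
qed

lemma compact_Omega: "compact (Omega :: (real^'n::finite) set)"
proof (rule bounded_closed_imp_seq_compact [THEN compact_eq_seq_compact_metric [THEN iffD2]])
  have "Omega = {t::real^'n. \<forall>i. 0 \<le> t$i} \<inter> {t. (\<Sum>i\<in>UNIV. t$i) = 1}"
    by (auto simp: Omega_def)
  also have "closed \<dots>"
    by (intro closed_Int closed_positive_orthant closed_Collect_eq continuous_intros)
  finally show "closed (Omega :: (real^'n) set)" .
  have "norm t \<le> real CARD('n)" if "t \<in> Omega" for t :: "real^'n"
  proof -
    have "norm t \<le> (\<Sum>i\<in>UNIV. \<bar>t$i\<bar>)" by (rule norm_le_l1_cart)
    also have "\<dots> \<le> (\<Sum>i\<in>(UNIV::'n set). 1)"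
      by (intro sum_mono) (use Omega_component_nonneg[OF that] Omega_component_le_1[OF that] in auto)
    finally show ?thesis by simp
  qed
  then show "bounded (Omega :: (real^'n) set)" unfolding bounded_iff by blast
qed

lemma inner_Omega_bounds:
  assumes "t \<in> Omega" "s \<in> Omega"
  shows "0 \<le> t \<bullet> s" "t \<bullet> s \<le> 1"
proof -
  have inner: "t \<bullet> s = (\<Sum>i\<in>UNIV. t$i * s$i)" by (simp add: inner_vec_def)
  show "0 \<le> t \<bullet> s" unfolding inner
    by (intro sum_nonneg mult_nonneg_nonneg) (use assms Omega_component_nonneg in auto)
  have "(\<Sum>i\<in>UNIV. t$i * s$i) \<le> (\<Sum>i\<in>UNIV. s$i)"
    by (intro sum_mono mult_left_le_one_le)
      (use assms Omega_component_nonneg Omega_component_le_1 in auto)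
  then show "t \<bullet> s \<le> 1" unfolding inner using Omega_sum[OF assms(2)] by simp
qed

lemma Omega_extrapolate:
  assumes "t0 \<in> Omega" "t1 \<in> Omega" "0 \<le> h" "\<And>k. h \<le> t0$k"
  shows "t0 + h *\<^sub>R (t0 - t1) \<in> Omega"
proof -
  have "0 \<le> t0$k + h * (t0$k - t1$k)" for k
  proof -
    have "h * t1$k \<le> h" by (rule mult_left_le[OF Omega_component_le_1[OF assms(2)] assms(3)])
    moreover have "0 \<le> h * t0$k" using assms(3) Omega_component_nonneg[OF assms(1)] by simp
    ultimately show ?thesis using assms(4)[of k] by (simp add: right_diff_distrib)
  qed
  moreover have "(\<Sum>k\<in>UNIV. t0$k + h * (t0$k - t1$k)) = 1"
    using Omega_sum[OF assms(1)] Omega_sum[OF assms(2)]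
    by (simp add: sum.distrib sum_subtractf sum_distrib_left[symmetric])
  ultimately show ?thesis by (simp add: Omega_def)
qed

lemma Omega_drop_component:
  assumes "t \<in> Omega" "t$i < 1"
  shows "(\<chi> k. if k = i then 0 else t$k / (1 - t$i)) \<in> Omega"
proof -
  have "(\<Sum>k\<in>UNIV. t$k) = t$i + (\<Sum>k\<in>UNIV-{i}. t$k)" by (simp add: sum.remove[of UNIV i])
  then have rest: "(\<Sum>k\<in>UNIV-{i}. t$k) = 1 - t$i" using Omega_sum[OF assms(1)] by simp
  have "(\<Sum>k\<in>UNIV. (if k = i then 0 else t$k / (1 - t$i))) = (\<Sum>k\<in>UNIV-{i}. t$k) / (1 - t$i)"
    by (simp add: sum.If_cases sum_divide_distrib Diff_eq Compl_eq)
  also have "\<dots> = 1" using rest assms(2) by simp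
  finally show ?thesis using assms Omega_component_nonneg by (auto simp: Omega_def)
qed

section \<open>The class Psi and the dual function\<close>

lemma Psi_axis: "psi \<in> Psi \<Longrightarrow> psi (axis i 1) = 1"
  by (simp add: Psi_def)

lemma Psi_drop_component_le:
  assumes psi: "psi \<in> Psi" and t: "t \<in> Omega" and ti: "0 < t$i" "t$i < 1"
  shows "(1 - t$i) * psi (\<chi> k. if k = i then 0 else t$k / (1 - t$i)) \<le> psi t"
proof -
  have "t$k < 1" for k
    using Omega_two_components_le[OF t, of i k] ti by (cases "k = i") auto
  then have "t \<in> Omega_int" using t by (simp add: Omega_int_def)
  then show ?thesis using psi by (simp add: Psi_def)
qed

lemma Psi_component_le:
  assumes psi: "psi \<in> Psi" and "t \<in> Omega"
  shows "t$j \<le> psi t"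
  using assms(2)
proof (induction "card {k. t$k \<noteq> 0}" arbitrary: t rule: less_induct)
  case less
  \<comment> \<open>Each application of (B2) removes a coordinate \<open>i \<noteq> j\<close> from the support.\<close>
  show ?case
  proof (cases "\<exists>i. i \<noteq> j \<and> t$i \<noteq> 0")
    case False
    then have "(\<Sum>k\<in>UNIV-{j}. t$k) = 0" by (intro sum.neutral) auto
    then have "(\<Sum>k\<in>UNIV. t$k) = t$j" by (simp add: sum.remove[of UNIV j])
    then have "t = axis j 1" using Omega_eq_axis[OF less.prems] Omega_sum[OF less.prems] by simp
    then show ?thesis using Psi_axis[OF psi] by (simp add: axis_def)
  next
    case True
    then obtain i where ij: "i \<noteq> j" and ti: "0 < t$i"
      using Omega_component_nonneg[OF less.prems] by (metis order_neq_le_trans)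
    show ?thesis
    proof (cases "t$i = 1")
      case True
      then show ?thesis using Omega_eq_axis[OF less.prems True] Psi_axis[OF psi] ij by (simp add: axis_def)
    next
      case False
      then have ti1: "t$i < 1" using Omega_component_le_1[OF less.prems, of i] by simp
      define t' where "t' = (\<chi> k. if k = i then 0 else t$k / (1 - t$i))"
      have "{k. t'$k \<noteq> 0} = {k. t$k \<noteq> 0} - {i}" using ti1 by (auto simp: t'_def)
      then have "card {k. t'$k \<noteq> 0} < card {k. t$k \<noteq> 0}"
        using ti by (metis (mono_tags) card_Diff1_less finite less_irrefl mem_Collect_eq)
      moreover have "t' \<in> Omega" unfolding t'_def by (rule Omega_drop_component[OF less.prems ti1])
      ultimately have IH: "t'$j \<le> psi t'" by (rule less.hyps)
      have "t$j = (1 - t$i) * t'$j" using ij ti1 by (simp add: t'_def)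
      also have "\<dots> \<le> (1 - t$i) * psi t'" using IH ti1 by (intro mult_left_mono) auto
      also have "\<dots> \<le> psi t" unfolding t'_def by (rule Psi_drop_component_le[OF psi less.prems ti ti1])
      finally show ?thesis .
    qed
  qed
qed

lemma Psi_ge:
  assumes "psi \<in> Psi" "t \<in> (Omega :: (real^'n::finite) set)"
  shows "1 / real CARD('n) \<le> psi t"
  using Omega_ex_component_ge[OF assms(2)] Psi_component_le[OF assms] order_trans by blast

lemma Psi_pos: "psi \<in> Psi \<Longrightarrow> t \<in> Omega \<Longrightarrow> 0 < psi t"
  by (rule less_le_trans[OF _ Psi_ge]) auto

lemma Psi_le_1:
  assumes psi: "psi \<in> Psi" and t: "t \<in> Omega"
  shows "psi t \<le> 1"
proof -
  have "t = (\<Sum>i\<in>UNIV. t$i *\<^sub>R axis i 1)"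
    by (simp add: vec_eq_iff axis_def sum_component if_distrib cong: if_cong)
  moreover have "psi (\<Sum>i\<in>UNIV. t$i *\<^sub>R axis i 1) \<le> (\<Sum>i\<in>UNIV. t$i * psi (axis i 1))"
    by (rule convex_on_sum) (use psi t axis_in_Omega in \<open>auto simp: Psi_def Omega_def\<close>)
  ultimately have "psi t \<le> (\<Sum>i\<in>UNIV. t$i * psi (axis i 1))" by simp
  also have "\<dots> = 1" using Psi_axis[OF psi] Omega_sum[OF t] by simp
  finally show ?thesis .
qed

lemma Psi_ratio_bounds:
  fixes psi phi :: "(real^'n::finite) \<Rightarrow> real"
  assumes psi: "psi \<in> Psi" and phi: "phi \<in> Psi"
  shows "0 < (INF s\<in>Omega. psi s / phi s)"
    and "t \<in> Omega \<Longrightarrow> (INF s\<in>Omega. psi s / phi s) * phi t \<le> psi t"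
    and "t \<in> Omega \<Longrightarrow> psi t \<le> (SUP s\<in>Omega. psi s / phi s) * phi t"
proof -
  have cont: "continuous_on Omega (\<lambda>t. psi t / phi t)"
    using psi phi by (intro continuous_on_divide) (auto simp: Psi_def dest: Psi_pos[OF phi])
  obtain t0 where "(SUP s\<in>Omega. psi s / phi s) = psi t0 / phi t0"
    and max: "\<And>t. t \<in> Omega \<Longrightarrow> psi t / phi t \<le> psi t0 / phi t0"
    using continuous_attains_SUP[OF compact_Omega Omega_nonempty cont] by blast
  moreover obtain t1 where "t1 \<in> Omega" and "(INF s\<in>Omega. psi s / phi s) = psi t1 / phi t1"
    and min: "\<And>t. t \<in> Omega \<Longrightarrow> psi t1 / phi t1 \<le> psi t / phi t"
    using continuous_attains_INF[OF compact_Omega Omega_nonempty cont] by blast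
  ultimately show "0 < (INF s\<in>Omega. psi s / phi s)"
    and "t \<in> Omega \<Longrightarrow> (INF s\<in>Omega. psi s / phi s) * phi t \<le> psi t"
    and "t \<in> Omega \<Longrightarrow> psi t \<le> (SUP s\<in>Omega. psi s / phi s) * phi t"
    using Psi_pos[OF psi] Psi_pos[OF phi] by (auto simp: field_simps)
qed

lemma inner_div_Psi_le_card:
  assumes "psi \<in> Psi" "t \<in> (Omega :: (real^'n::finite) set)" "s \<in> Omega"
  shows "(t \<bullet> s) / psi t \<le> real CARD('n)"
proof -
  have psi_t: "1 / real CARD('n) \<le> psi t" "0 < psi t" using Psi_ge[OF assms(1,2)] Psi_pos[OF assms(1,2)] .
  have "(t \<bullet> s) / psi t \<le> 1 / psi t"
    using inner_Omega_bounds[OF assms(2,3)] psi_t by (intro divide_right_mono) auto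
  also have "\<dots> \<le> real CARD('n)" using psi_t by (simp add: divide_le_eq mult.commute)
  finally show ?thesis .
qed

lemma psi_star_upper:
  assumes "psi \<in> Psi" "s \<in> Omega" "t \<in> Omega"
  shows "(t \<bullet> s) / psi t \<le> psi_star psi s"
proof -
  have "bdd_above ((\<lambda>t. (t \<bullet> s) / psi t) ` Omega)"
    by (rule bdd_aboveI2) (rule inner_div_Psi_le_card[OF assms(1) _ assms(2)])
  then show ?thesis unfolding psi_star_def by (rule cSUP_upper[OF assms(3)])
qed

lemma psi_star_least:
  assumes "\<And>t. t \<in> Omega \<Longrightarrow> (t \<bullet> s) / psi t \<le> b"
  shows "psi_star psi s \<le> b"
  unfolding psi_star_def by (rule cSUP_least[OF Omega_nonempty assms])

lemma psi_star_component_ge: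
  assumes "psi \<in> Psi" "s \<in> Omega"
  shows "s$j \<le> psi_star psi s"
  using psi_star_upper[OF assms axis_in_Omega[of j]] assms(1) by (simp add: Psi_axis inner_axis')

lemma psi_star_bounds:
  assumes "psi \<in> Psi" "s \<in> (Omega :: (real^'n::finite) set)"
  shows "1 / real CARD('n) \<le> psi_star psi s" "psi_star psi s \<le> real CARD('n)"
proof -
  show "1 / real CARD('n) \<le> psi_star psi s"
    using Omega_ex_component_ge[OF assms(2)] psi_star_component_ge[OF assms] order_trans by blast
  show "psi_star psi s \<le> real CARD('n)"
    by (rule psi_star_least) (rule inner_div_Psi_le_card[OF assms(1) _ assms(2)])
qed

lemma psi_star_pos: "psi \<in> Psi \<Longrightarrow> s \<in> Omega \<Longrightarrow> 0 < psi_star psi s"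
  by (rule less_le_trans[OF _ psi_star_bounds(1)]) auto

lemma psi_star_axis:
  fixes psi :: "(real^'n::finite) \<Rightarrow> real"
  assumes psi: "psi \<in> Psi"
  shows "psi_star psi (axis i 1) = 1"
proof (rule antisym)
  show "psi_star psi (axis i 1) \<le> 1"
  proof (rule psi_star_least)
    fix t :: "real^'n" assume t: "t \<in> Omega"
    then show "(t \<bullet> axis i 1) / psi t \<le> 1"
      using Psi_component_le[OF psi t, of i] Psi_pos[OF psi t] by (simp add: inner_axis)
  qed
  show "1 \<le> psi_star psi (axis i 1)"
    using psi_star_component_ge[OF psi axis_in_Omega, of i i] by simp
qed

lemma psi_star_antimono:
  fixes psi phi :: "(real^'n::finite) \<Rightarrow> real"
  assumes psi: "psi \<in> Psi" and phi: "phi \<in> Psi" and s: "s \<in> Omega"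
    and c: "0 < c" and le: "\<And>t. t \<in> Omega \<Longrightarrow> c * phi t \<le> psi t"
  shows "c * psi_star psi s \<le> psi_star phi s"
proof -
  have "psi_star psi s \<le> psi_star phi s / c"
  proof (rule psi_star_least)
    fix t :: "real^'n" assume t: "t \<in> Omega"
    have "(t \<bullet> s) / psi t \<le> (t \<bullet> s) / (c * phi t)"
      using le[OF t] Psi_pos[OF phi t] Psi_pos[OF psi t] c inner_Omega_bounds(1)[OF t s]
      by (intro divide_left_mono) auto
    also have "\<dots> \<le> psi_star phi s / c"
      using divide_right_mono[OF psi_star_upper[OF phi s t], of c] c by (simp add: mult.commute)
    finally show "(t \<bullet> s) / psi t \<le> psi_star phi s / c" .
  qed
  then show ?thesis using c by (simp add: field_simps)
qed

lemma psi_star_at_max_ratio: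
  fixes psi :: "(real^'n::finite) \<Rightarrow> real"
  assumes psi: "psi \<in> Psi" and t0: "t0 \<in> Omega"
    and max: "\<And>t. t \<in> Omega \<Longrightarrow> psi t / norm t \<le> psi t0 / norm t0"
    and interior_or_vertex: "(\<forall>k. 0 < t0$k) \<or> (\<exists>l. t0 = axis l 1)"
  shows "psi_star psi t0 \<le> (norm t0)^2 / psi t0"
proof (rule psi_star_least)
  fix t1 :: "real^'n" assume t1: "t1 \<in> Omega"
  define M where "M = psi t0 / norm t0"
  have n0: "0 < norm t0" using Omega_nonzero[OF t0] by simp
  have M: "0 < M" using Psi_pos[OF psi t0] n0 by (simp add: M_def)
  have "M * (t1 \<bullet> t0) \<le> norm t0 * psi t1"
    using interior_or_vertex
  proof
    assume pos: "\<forall>k. 0 < t0$k"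
    define \<delta> where "\<delta> = Min (range (\<lambda>k. t0$k))"
    have \<delta>: "0 < \<delta>" "\<And>k. \<delta> \<le> t0$k" using pos by (auto simp: \<delta>_def)
    show ?thesis
    proof (rule convex_on_below_norm_support[OF _ _ _ _ t1 \<delta>(1)])
      show "convex_on Omega psi" using psi by (simp add: Psi_def)
      show "psi t \<le> M * norm t" if "t \<in> Omega" for t
        using max[OF that] Omega_nonzero[OF that] by (simp add: M_def divide_le_eq mult.commute)
      show "psi t0 = M * norm t0" using n0 by (simp add: M_def)
      show "t0 + h *\<^sub>R (t0 - t1) \<in> Omega" if "0 < h" "h \<le> \<delta>" for h
        using that \<delta>(2) by (intro Omega_extrapolate[OF t0 t1]) (auto intro: order_trans)
    qed (use M in simp)
  next
    assume "\<exists>l. t0 = axis l 1"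
    then obtain l where l: "t0 = axis l 1" by blast
    then have "M = 1" by (simp add: M_def Psi_axis[OF psi])
    then show ?thesis using Psi_component_le[OF psi t1, of l] l by (simp add: inner_axis)
  qed
  then show "(t1 \<bullet> t0) / psi t1 \<le> (norm t0)^2 / psi t0"
    using Psi_pos[OF psi t1] Psi_pos[OF psi t0] n0
    by (simp add: M_def divide_simps power2_eq_square) (simp add: algebra_simps)
qed

section \<open>Psi-direct sum norms\<close>

lemma sum_norm_pos:
  fixes x :: "'a::real_normed_vector^'n::finite"
  assumes "x \<noteq> 0"
  shows "0 < (\<Sum>j\<in>UNIV. norm (x$j))"
proof -
  obtain i where "x$i \<noteq> 0" using assms by (auto simp: vec_eq_iff)
  then have "0 < norm (x$i)" by simp
  also have "norm (x$i) \<le> (\<Sum>j\<in>UNIV. norm (x$j))" by (rule member_le_sum) auto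
  finally show ?thesis .
qed

lemma psi_norm_normalized_in_Omega:
  fixes x :: "'a::real_normed_vector^'n::finite"
  assumes "x \<noteq> 0"
  shows "(\<chi> i. norm (x$i) / (\<Sum>j\<in>UNIV. norm (x$j))) \<in> Omega"
  using sum_norm_pos[OF assms] by (auto simp: Omega_def sum_divide_distrib[symmetric])

lemma psi_norm_mono:
  assumes "\<And>t. t \<in> Omega \<Longrightarrow> a * F t \<le> b * G t"
  shows "a * psi_norm F x \<le> b * psi_norm G x"
proof (cases "x = 0")
  case False
  have "0 \<le> (\<Sum>j\<in>UNIV. norm (x$j))" by (simp add: sum_nonneg)
  from mult_left_mono[OF assms[OF psi_norm_normalized_in_Omega[OF False]] this] False
  show ?thesis by (simp add: psi_norm_def mult.left_commute)
qed (simp add: psi_norm_def)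

lemma psi_norm_const: "psi_norm (\<lambda>_. c) x = c * (\<Sum>i\<in>UNIV. norm (x$i))"
  by (simp add: psi_norm_def)

lemma psi_norm_pos:
  fixes x :: "'a::real_normed_vector^'n::finite"
  assumes "\<And>t. t \<in> Omega \<Longrightarrow> 0 < F t" "x \<noteq> 0"
  shows "0 < psi_norm F x"
  using sum_norm_pos[OF assms(2)] assms(1)[OF psi_norm_normalized_in_Omega[OF assms(2)]] assms(2)
  by (simp add: psi_norm_def)

lemma psi_norm_nonneg:
  assumes "\<And>t. t \<in> Omega \<Longrightarrow> 0 \<le> F t"
  shows "0 \<le> psi_norm F x"
  using assms[OF psi_norm_normalized_in_Omega] by (auto simp: psi_norm_def intro!: mult_nonneg_nonneg sum_nonneg)

lemma ex_psi_norm_pos: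
  assumes "\<exists>x::'a::real_normed_vector. x \<noteq> 0" "\<And>t. t \<in> Omega \<Longrightarrow> 0 < F t"
  shows "\<exists>x::'a^'n::finite. 0 < psi_norm F x"
proof -
  obtain e :: 'a where "e \<noteq> 0" using assms(1) by blast
  then have "(\<chi> k. e :: 'a^'n) \<noteq> 0" by (auto simp: vec_eq_iff)
  then show ?thesis using psi_norm_pos[of F, OF assms(2)] by blast
qed

lemma bdd_above_NJ_ratios_psi_norm:
  fixes F :: "(real^'n::finite) \<Rightarrow> real"
  assumes c: "0 < c" and bounds: "\<And>t. t \<in> Omega \<Longrightarrow> c \<le> F t \<and> F t \<le> B"
  shows "bdd_above (NJ_ratios (psi_norm F :: 'a::real_normed_vector^'n \<Rightarrow> real))"
proof (rule bdd_above_NJ_ratiosI)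
  let ?L = "psi_norm (\<lambda>_. 1) :: 'a^'n \<Rightarrow> real"
  fix x y :: "'a^'n"
  have "NJ_ratio (psi_norm F) x y \<le> (B / c)^2 * NJ_ratio ?L x y"
  proof (rule NJ_ratio_equiv_le[OF _ _ _ c])
    show "0 \<le> ?L z" for z by (simp add: psi_norm_const sum_nonneg)
    show "c * ?L z \<le> psi_norm F z" for z
      using psi_norm_mono[of c "\<lambda>_. 1" 1 F] bounds by simp
    show "psi_norm F z \<le> B * ?L z" for z
      using psi_norm_mono[of 1 F B "\<lambda>_. 1"] bounds by simp
  qed
  also have "NJ_ratio ?L x y \<le> 2"
    by (rule NJ_ratio_le_2) (simp_all add: psi_norm_const sum_nonneg norm_triangle_ineq sum.distrib[symmetric] sum_mono)
  then have "(B / c)^2 * NJ_ratio ?L x y \<le> (B / c)^2 * 2" by (simp add: mult_left_mono)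
  finally show "NJ_ratio (psi_norm F) x y \<le> (B / c)^2 * 2" .
qed

lemma bdd_above_NJ_ratios_Psi:
  "psi \<in> Psi \<Longrightarrow> bdd_above (NJ_ratios (psi_norm psi :: 'a::real_normed_vector^'n::finite \<Rightarrow> real))"
  by (rule bdd_above_NJ_ratios_psi_norm[of "1 / real CARD('n)" _ 1]) (auto simp: Psi_ge Psi_le_1)

lemma bdd_above_NJ_ratios_psi_star:
  "psi \<in> Psi \<Longrightarrow> bdd_above (NJ_ratios (psi_norm (psi_star psi) :: 'a::real_normed_vector^'n::finite \<Rightarrow> real))"
  by (rule bdd_above_NJ_ratios_psi_norm[of "1 / real CARD('n)" _ "real CARD('n)"])
    (auto simp: psi_star_bounds)

lemma CNJ_psi_norm_le_equiv:
  fixes F G :: "(real^'n::finite) \<Rightarrow> real"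
  assumes nontriv: "\<exists>x::'a::real_normed_vector. x \<noteq> 0"
    and F: "\<And>t. t \<in> Omega \<Longrightarrow> 0 < F t" and G: "\<And>t. t \<in> Omega \<Longrightarrow> 0 \<le> G t"
    and a: "0 < a" and lower: "\<And>t. t \<in> Omega \<Longrightarrow> a * G t \<le> F t"
    and upper: "\<And>t. t \<in> Omega \<Longrightarrow> F t \<le> b * G t"
    and bdd: "bdd_above (NJ_ratios (psi_norm G :: 'a^'n \<Rightarrow> real))"
  shows "CNJ (psi_norm F :: 'a^'n \<Rightarrow> real) \<le> (b / a)^2 * CNJ (psi_norm G :: 'a^'n \<Rightarrow> real)"
proof -
  obtain x0 :: "'a^'n" where x0: "0 < psi_norm F x0"
    using ex_psi_norm_pos[where F = F, OF nontriv F] by blast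
  show ?thesis
  proof (rule CNJ_le_equiv[where N = "psi_norm F" and z = x0, OF _ _ _ a bdd x0])
    show "0 \<le> psi_norm G x" for x :: "'a^'n" by (rule psi_norm_nonneg[OF G])
    show "a * psi_norm G x \<le> psi_norm F x" for x :: "'a^'n"
      using psi_norm_mono[of a G 1 F] lower by simp
    show "psi_norm F x \<le> b * psi_norm G x" for x :: "'a^'n"
      using psi_norm_mono[of 1 F b G] upper by simp
  qed
qed

theorem CNJ_psi_norm_le:
  fixes psi phi :: "(real^'n::finite) \<Rightarrow> real"
  assumes nontriv: "\<exists>x::'a::real_normed_vector. x \<noteq> 0"
    and psi: "psi \<in> Psi" and phi: "phi \<in> Psi" and a: "0 < a"
    and lower: "\<And>t. t \<in> Omega \<Longrightarrow> a * phi t \<le> psi t"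
    and upper: "\<And>t. t \<in> Omega \<Longrightarrow> psi t \<le> b * phi t"
  shows "CNJ (psi_norm psi :: 'a^'n \<Rightarrow> real) \<le> (b / a)^2 * CNJ (psi_norm phi :: 'a^'n \<Rightarrow> real)"
    and "CNJ (psi_norm (psi_star psi) :: 'a^'n \<Rightarrow> real)
           \<le> (b / a)^2 * CNJ (psi_norm (psi_star phi) :: 'a^'n \<Rightarrow> real)"
proof -
  have b: "0 < b" using upper[OF axis_in_Omega] by (simp add: Psi_axis[OF psi] Psi_axis[OF phi])
  show "CNJ (psi_norm psi :: 'a^'n \<Rightarrow> real) \<le> (b / a)^2 * CNJ (psi_norm phi :: 'a^'n \<Rightarrow> real)"
    by (rule CNJ_psi_norm_le_equiv[OF nontriv _ _ a lower upper bdd_above_NJ_ratios_Psi[OF phi]])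
      (use Psi_pos[OF psi] Psi_pos[OF phi] in \<open>auto intro: less_imp_le\<close>)
  have "1 / b * psi_star phi s \<le> psi_star psi s" if "s \<in> Omega" for s
    by (rule psi_star_antimono[OF phi psi that]) (use b upper in \<open>auto simp: field_simps\<close>)
  moreover have "psi_star psi s \<le> 1 / a * psi_star phi s" if "s \<in> Omega" for s
    using psi_star_antimono[OF psi phi that a lower] a by (simp add: field_simps)
  ultimately have "CNJ (psi_norm (psi_star psi) :: 'a^'n \<Rightarrow> real)
      \<le> ((1 / a) / (1 / b))^2 * CNJ (psi_norm (psi_star phi) :: 'a^'n \<Rightarrow> real)"
    using b by (intro CNJ_psi_norm_le_equiv[OF nontriv _ _ _ _ _ bdd_above_NJ_ratios_psi_star[OF phi]])
      (auto intro: less_imp_le psi_star_pos[OF psi] psi_star_pos[OF phi])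
  then show "CNJ (psi_norm (psi_star psi) :: 'a^'n \<Rightarrow> real)
               \<le> (b / a)^2 * CNJ (psi_norm (psi_star phi) :: 'a^'n \<Rightarrow> real)"
    by simp
qed

section \<open>Two summands\<close>

lemma Omega_card_2:
  assumes "CARD('n::finite) = 2"
  obtains i j :: "'n::finite" where "i \<noteq> j" "\<And>k. k = i \<or> k = j"
    "\<And>t::real^'n. t = axis i (t$i) + axis j (t$j)" "\<And>t::real^'n. t \<in> Omega \<Longrightarrow> t$i + t$j = 1"
proof -
  obtain i j :: 'n where ij: "i \<noteq> j" and U: "UNIV = {i, j}"
    using assms card_2_iff[of "UNIV :: 'n set"] by auto
  have "t = axis i (t$i) + axis j (t$j)" for t :: "real^'n"
    using U ij by (auto simp: vec_eq_iff axis_def)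
  moreover have "t$i + t$j = 1" if "t \<in> Omega" for t :: "real^'n"
    using Omega_sum[OF that] ij by (simp add: U)
  ultimately show ?thesis using that ij U by blast
qed

lemma Omega_card_2_interior_or_vertex:
  assumes "CARD('n::finite) = 2" "t \<in> (Omega :: (real^'n) set)"
  shows "(\<forall>k. 0 < t$k) \<or> (\<exists>l. t = axis l 1)"
proof -
  obtain i j :: 'n where ij: "\<And>k. k = i \<or> k = j" and sum: "t$i + t$j = 1"
    using Omega_card_2[OF assms(1)] assms(2) by metis
  consider "0 < t$i" "0 < t$j" | "t$i = 1" | "t$j = 1"
    using sum Omega_component_nonneg[OF assms(2)] by (metis add_0 add_0_right order_less_le)
  then show ?thesis
    by cases (use ij Omega_eq_axis[OF assms(2)] in metis)+
qed

lemma norm_axis_pair_sq: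
  assumes "i \<noteq> j"
  shows "(norm (axis i a + axis j b :: real^'n::finite))^2 = a^2 + b^2"
  unfolding power2_norm_eq_inner using assms
  by (simp add: inner_add_left inner_add_right inner_axis_axis power2_eq_square)

lemma psi_norm_axis:
  fixes F :: "(real^'n::finite) \<Rightarrow> real"
  assumes "F (axis i 1) = 1"
  shows "psi_norm F (axis i x :: 'a::real_normed_vector^'n) = norm x"
proof (cases "x = 0")
  case False
  have "(\<Sum>j\<in>UNIV. norm (axis i x $ j)) = norm x"
    by (simp add: axis_def if_distrib cong: if_cong)
  moreover have "(\<chi> k. norm (axis i x $ k) / norm x) = axis i 1"
    using False by (simp add: vec_eq_iff axis_def)
  ultimately show ?thesis using False assms by (simp add: psi_norm_def)
qed (simp add: psi_norm_def)

lemma psi_norm_axis_pair: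
  fixes F :: "(real^'n::finite) \<Rightarrow> real" and e :: "'a::real_normed_vector"
  assumes ij: "i \<noteq> j" and e: "norm e = 1" and ab: "\<bar>a\<bar> + \<bar>b\<bar> = 1"
  shows "psi_norm F (axis i (a *\<^sub>R e) + axis j (b *\<^sub>R e)) = F (axis i \<bar>a\<bar> + axis j \<bar>b\<bar>)"
proof -
  let ?x = "axis i (a *\<^sub>R e) + axis j (b *\<^sub>R e)"
  have comp: "norm (?x $ k) = (axis i \<bar>a\<bar> + axis j \<bar>b\<bar>) $ k" for k
    using ij e by (auto simp: axis_def)
  have "(\<Sum>k\<in>UNIV. norm (?x $ k)) = \<bar>a\<bar> + \<bar>b\<bar>"
    unfolding comp by (simp add: sum.distrib axis_def)
  then have sum: "(\<Sum>k\<in>UNIV. norm (?x $ k)) = 1" using ab by simp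
  then have "?x \<noteq> 0" by (metis (no_types) norm_zero sum.neutral zero_index zero_neq_one)
  then have "psi_norm F ?x
      = (\<Sum>k\<in>UNIV. norm (?x $ k)) * F (\<chi> k. norm (?x $ k) / (\<Sum>k\<in>UNIV. norm (?x $ k)))"
    unfolding psi_norm_def by (simp only: if_False)
  moreover have "(\<chi> k. norm (?x $ k)) = axis i \<bar>a\<bar> + axis j \<bar>b\<bar>"
    unfolding comp by (rule vec_lambda_eta)
  ultimately show ?thesis unfolding sum div_by_1 mult_1 by simp
qed

lemma NJ_ratio_psi_norm_axis_split:
  fixes F :: "(real^'n::finite) \<Rightarrow> real" and e :: "'a::real_normed_vector"
  assumes ij: "i \<noteq> j" and e: "norm e = 1" and Fi: "F (axis i 1) = 1" and Fj: "F (axis j 1) = 1"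
    and ab: "0 \<le> a" "0 \<le> b" "a + b = 1"
  shows "NJ_ratio (psi_norm F) (axis i (a *\<^sub>R e)) (axis j (b *\<^sub>R e))
           = (F (axis i a + axis j b) / norm (axis i a + axis j b))^2"
proof -
  have diff: "axis i (a *\<^sub>R e) - axis j (b *\<^sub>R e) = axis i (a *\<^sub>R e) + axis j ((- b) *\<^sub>R e)"
    by (simp add: vec_eq_iff axis_def)
  have "psi_norm F (axis i (a *\<^sub>R e) - axis j (b *\<^sub>R e)) = F (axis i a + axis j b)"
    unfolding diff using psi_norm_axis_pair[OF ij e, of a "- b" F] ab by simp
  moreover have "psi_norm F (axis i (a *\<^sub>R e) + axis j (b *\<^sub>R e)) = F (axis i a + axis j b)"
    using psi_norm_axis_pair[OF ij e, of a b F] ab by simp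
  moreover have "psi_norm F (axis i (a *\<^sub>R e)) = a" "psi_norm F (axis j (b *\<^sub>R e)) = b"
    using e ab by (simp_all add: psi_norm_axis[where F = F, OF Fi] psi_norm_axis[where F = F, OF Fj])
  ultimately have "NJ_ratio (psi_norm F) (axis i (a *\<^sub>R e)) (axis j (b *\<^sub>R e))
      = (2 * (F (axis i a + axis j b))^2) / (2 * (a^2 + b^2))"
    unfolding NJ_ratio_def by simp
  then show ?thesis
    unfolding power_divide norm_axis_pair_sq[OF ij] mult_divide_mult_cancel_left_if by simp
qed

lemma NJ_ratio_psi_norm_axis_merge:
  fixes F :: "(real^'n::finite) \<Rightarrow> real" and e :: "'a::real_normed_vector"
  assumes ij: "i \<noteq> j" and e: "norm e = 1" and Fi: "F (axis i 1) = 1" and Fj: "F (axis j 1) = 1"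
    and ab: "0 \<le> a" "0 \<le> b" "a + b = 1"
  shows "NJ_ratio (psi_norm F) (axis i (a *\<^sub>R e) + axis j (b *\<^sub>R e)) (axis i (a *\<^sub>R e) + axis j ((- b) *\<^sub>R e))
           = (norm (axis i a + axis j b) / F (axis i a + axis j b))^2"
proof -
  have "axis i (a *\<^sub>R e) + axis j (b *\<^sub>R e) + (axis i (a *\<^sub>R e) + axis j ((- b) *\<^sub>R e)) = axis i ((2 * a) *\<^sub>R e)"
    "axis i (a *\<^sub>R e) + axis j (b *\<^sub>R e) - (axis i (a *\<^sub>R e) + axis j ((- b) *\<^sub>R e)) = axis j ((2 * b) *\<^sub>R e)"
    using ij by (simp_all add: vec_eq_iff axis_def scaleR_left_distrib[symmetric])
  moreover have "psi_norm F (axis i ((2 * a) *\<^sub>R e)) = 2 * a" "psi_norm F (axis j ((2 * b) *\<^sub>R e)) = 2 * b"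
    using e ab by (simp_all add: psi_norm_axis[where F = F, OF Fi] psi_norm_axis[where F = F, OF Fj])
  moreover have "psi_norm F (axis i (a *\<^sub>R e) + axis j (b *\<^sub>R e)) = F (axis i a + axis j b)"
    "psi_norm F (axis i (a *\<^sub>R e) + axis j ((- b) *\<^sub>R e)) = F (axis i a + axis j b)"
    using psi_norm_axis_pair[OF ij e, of a b F] psi_norm_axis_pair[OF ij e, of a "- b" F] ab by simp_all
  ultimately have "NJ_ratio (psi_norm F) (axis i (a *\<^sub>R e) + axis j (b *\<^sub>R e))
      (axis i (a *\<^sub>R e) + axis j ((- b) *\<^sub>R e)) = (4 * (a^2 + b^2)) / (4 * (F (axis i a + axis j b))^2)"
    unfolding NJ_ratio_def by (simp add: power_mult_distrib)
  then show ?thesis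
    unfolding power_divide norm_axis_pair_sq[OF ij] mult_divide_mult_cancel_left_if by simp
qed

lemma CNJ_psi_norm_ge_card_2_at:
  fixes F :: "(real^'n::finite) \<Rightarrow> real"
  assumes card: "CARD('n) = 2" and nontriv: "\<exists>x::'a::real_normed_vector. x \<noteq> 0"
    and bdd: "bdd_above (NJ_ratios (psi_norm F :: 'a^'n \<Rightarrow> real))"
    and axis: "\<And>k. F (axis k 1) = 1" and t: "t \<in> Omega" and pos: "0 < F t"
  shows "(F t / norm t)^2 \<le> CNJ (psi_norm F :: 'a^'n \<Rightarrow> real)"
    and "(norm t / F t)^2 \<le> CNJ (psi_norm F :: 'a^'n \<Rightarrow> real)"
proof -
  obtain i j :: 'n where ij: "i \<noteq> j" and "\<And>k. k = i \<or> k = j"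
    and decomp: "\<And>t::real^'n. t = axis i (t$i) + axis j (t$j)" and sums: "\<And>t::real^'n. t \<in> Omega \<Longrightarrow> t$i + t$j = 1"
    using Omega_card_2[OF card] by blast
  note t_eq = decomp[of t] and sum = sums[OF t]
  have ab: "0 \<le> t$i" "0 \<le> t$j" using Omega_component_nonneg[OF t] by auto
  obtain e :: 'a where e: "norm e = 1" using nontriv norm_sgn by metis
  note psi_norm_pair = psi_norm_axis_pair[OF ij e, where F = F]
  have "0 < psi_norm F (axis i ((t$i) *\<^sub>R e)) + psi_norm F (axis j ((t$j) *\<^sub>R e))"
    using e ab sum by (simp add: psi_norm_axis[where F = F, OF axis])
  from NJ_ratio_le_CNJ[OF bdd this]
  show "(F t / norm t)^2 \<le> CNJ (psi_norm F :: 'a^'n \<Rightarrow> real)"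
    unfolding NJ_ratio_psi_norm_axis_split[where F = F, OF ij e axis axis ab sum] t_eq[symmetric] .
  have "0 < psi_norm F (axis i ((t$i) *\<^sub>R e) + axis j ((t$j) *\<^sub>R e))
          + psi_norm F (axis i ((t$i) *\<^sub>R e) + axis j ((- t$j) *\<^sub>R e))"
    using psi_norm_pair[of "t$i" "t$j"] psi_norm_pair[of "t$i" "- t$j"] ab sum pos t_eq[symmetric] by simp
  from NJ_ratio_le_CNJ[OF bdd this]
  show "(norm t / F t)^2 \<le> CNJ (psi_norm F :: 'a^'n \<Rightarrow> real)"
    unfolding NJ_ratio_psi_norm_axis_merge[where F = F, OF ij e axis axis ab sum] t_eq[symmetric] .
qed

theorem CNJ_psi_norm_ge_card_2:
  fixes psi :: "(real^'n::finite) \<Rightarrow> real"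
  assumes card: "CARD('n) = 2" and nontriv: "\<exists>x::'a::real_normed_vector. x \<noteq> 0"
    and psi: "psi \<in> Psi"
  shows "(SUP t\<in>Omega. psi t / norm t)^2 \<le> CNJ (psi_norm psi :: 'a^'n \<Rightarrow> real)"
    and "(SUP t\<in>Omega. psi t / norm t)^2 \<le> CNJ (psi_norm (psi_star psi) :: 'a^'n \<Rightarrow> real)"
    and "1 / (INF t\<in>Omega. psi t / norm t)^2 \<le> CNJ (psi_norm psi :: 'a^'n \<Rightarrow> real)"
    and "1 / (INF t\<in>Omega. psi t / norm t)^2 \<le> CNJ (psi_norm (psi_star psi) :: 'a^'n \<Rightarrow> real)"
proof -
  have cont: "continuous_on Omega (\<lambda>t. psi t / norm t)"
    using psi by (intro continuous_on_divide continuous_on_norm_id) (auto simp: Psi_def dest: Omega_nonzero)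
  obtain t0 where t0: "t0 \<in> Omega" and sup: "(SUP t\<in>Omega. psi t / norm t) = psi t0 / norm t0"
    and max: "\<And>t. t \<in> Omega \<Longrightarrow> psi t / norm t \<le> psi t0 / norm t0"
    using continuous_attains_SUP[OF compact_Omega Omega_nonempty cont] by blast
  obtain t1 where t1: "t1 \<in> Omega" and inf: "(INF t\<in>Omega. psi t / norm t) = psi t1 / norm t1"
    using continuous_attains_INF[OF compact_Omega Omega_nonempty cont] by blast
  have pos: "0 < psi t" "0 < psi_star psi t" "0 < norm t" if "t \<in> Omega" for t
    using Psi_pos[OF psi that] psi_star_pos[OF psi that] Omega_nonzero[OF that] by auto
  note ge_psi = CNJ_psi_norm_ge_card_2_at[OF card nontriv bdd_above_NJ_ratios_Psi[OF psi] Psi_axis[OF psi]]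
  note ge_star = CNJ_psi_norm_ge_card_2_at[OF card nontriv bdd_above_NJ_ratios_psi_star[OF psi] psi_star_axis[OF psi]]
  show "(SUP t\<in>Omega. psi t / norm t)^2 \<le> CNJ (psi_norm psi :: 'a^'n \<Rightarrow> real)"
    unfolding sup by (rule ge_psi(1)[OF t0 pos(1)[OF t0]])
  have "psi_star psi t0 \<le> (norm t0)^2 / psi t0"
    by (rule psi_star_at_max_ratio[OF psi t0 max Omega_card_2_interior_or_vertex[OF card t0]])
  then have "psi t0 / norm t0 \<le> norm t0 / psi_star psi t0"
    using pos[OF t0] by (simp add: field_simps power2_eq_square)
  then have "(psi t0 / norm t0)^2 \<le> (norm t0 / psi_star psi t0)^2"
    using pos[OF t0] by (intro power_mono) auto
  also have "\<dots> \<le> CNJ (psi_norm (psi_star psi) :: 'a^'n \<Rightarrow> real)"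
    by (rule ge_star(2)[OF t0 pos(2)[OF t0]])
  finally show "(SUP t\<in>Omega. psi t / norm t)^2 \<le> CNJ (psi_norm (psi_star psi) :: 'a^'n \<Rightarrow> real)"
    unfolding sup .
  show "1 / (INF t\<in>Omega. psi t / norm t)^2 \<le> CNJ (psi_norm psi :: 'a^'n \<Rightarrow> real)"
    using ge_psi(2)[OF t1 pos(1)[OF t1]] unfolding inf by (simp add: power_divide)
  have "(t1 \<bullet> t1) / psi t1 \<le> psi_star psi t1" by (rule psi_star_upper[OF psi t1 t1])
  then have "norm t1 / psi t1 \<le> psi_star psi t1 / norm t1"
    using pos[OF t1] by (simp add: field_simps power2_eq_square flip: power2_norm_eq_inner)
  then have "(norm t1 / psi t1)^2 \<le> (psi_star psi t1 / norm t1)^2"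
    using pos[OF t1] by (intro power_mono) auto
  also have "\<dots> \<le> CNJ (psi_norm (psi_star psi) :: 'a^'n \<Rightarrow> real)"
    by (rule ge_star(1)[OF t1 pos(2)[OF t1]])
  finally show "1 / (INF t\<in>Omega. psi t / norm t)^2 \<le> CNJ (psi_norm (psi_star psi) :: 'a^'n \<Rightarrow> real)"
    unfolding inf by (simp add: power_divide)
qed

lemma Psi_eq_norm_if_CNJ_psi_norm_eq_1:
  fixes phi :: "(real^'n::finite) \<Rightarrow> real"
  assumes card: "CARD('n) = 2" and nontriv: "\<exists>x::'a::real_normed_vector. x \<noteq> 0"
    and phi: "phi \<in> Psi" and CNJ: "CNJ (psi_norm phi :: 'a^'n \<Rightarrow> real) = 1" and t: "t \<in> Omega"
  shows "phi t = norm t"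
proof -
  note ge = CNJ_psi_norm_ge_card_2_at[OF card nontriv bdd_above_NJ_ratios_Psi[OF phi] Psi_axis[OF phi]
      t Psi_pos[OF phi t], unfolded CNJ]
  have "phi t / norm t \<le> 1" "norm t / phi t \<le> 1"
    using ge abs_square_le_1 by (auto simp: abs_le_iff)
  then show ?thesis
    using Psi_pos[OF phi t] Omega_nonzero[OF t] by (simp add: divide_le_eq)
qed

theorem corollary6p3:
  fixes psi phi :: "(real^'n::finite) \<Rightarrow> real"
  assumes n2: "CARD('n) \<ge> 2"
    and nontriv: "\<exists>x::'a::real_normed_vector. x \<noteq> 0"
    and psi: "psi \<in> Psi" and phi: "phi \<in> Psi"
    and CNJ_phi: "CNJ (psi_norm phi :: 'a^'n \<Rightarrow> real) = 1"
    and CNJ_phistar: "CNJ (psi_norm (psi_star phi) :: 'a^'n \<Rightarrow> real) = 1"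
  defines "m \<equiv> (INF t\<in>Omega. psi t / phi t)"
    and "M \<equiv> (SUP t\<in>Omega. psi t / phi t)"
  shows "((\<forall>t\<in>Omega. phi t \<le> psi t) \<longrightarrow>
            CNJ (psi_norm psi :: 'a^'n \<Rightarrow> real) \<le> M^2 \<and>
            CNJ (psi_norm (psi_star psi) :: 'a^'n \<Rightarrow> real) \<le> M^2)
       \<and> ((\<forall>t\<in>Omega. psi t \<le> phi t) \<longrightarrow>
            CNJ (psi_norm psi :: 'a^'n \<Rightarrow> real) \<le> 1 / m^2 \<and>
            CNJ (psi_norm (psi_star psi) :: 'a^'n \<Rightarrow> real) \<le> 1 / m^2)
       \<and> (CARD('n) = 2 \<longrightarrow>
            ((\<forall>t\<in>Omega. phi t \<le> psi t) \<longrightarrow>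
               CNJ (psi_norm psi :: 'a^'n \<Rightarrow> real) = M^2 \<and>
               CNJ (psi_norm (psi_star psi) :: 'a^'n \<Rightarrow> real) = M^2)
          \<and> ((\<forall>t\<in>Omega. psi t \<le> phi t) \<longrightarrow>
               CNJ (psi_norm psi :: 'a^'n \<Rightarrow> real) = 1 / m^2 \<and>
               CNJ (psi_norm (psi_star psi) :: 'a^'n \<Rightarrow> real) = 1 / m^2))"
proof -
  have m: "0 < m" and lower: "\<And>t. t \<in> Omega \<Longrightarrow> m * phi t \<le> psi t"
    and upper: "\<And>t. t \<in> Omega \<Longrightarrow> psi t \<le> M * phi t"
    unfolding m_def M_def using Psi_ratio_bounds[OF psi phi] by auto
  have i: "CNJ (psi_norm psi :: 'a^'n \<Rightarrow> real) \<le> M^2 \<and> CNJ (psi_norm (psi_star psi) :: 'a^'n \<Rightarrow> real) \<le> M^2"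
    if "\<forall>t\<in>Omega. phi t \<le> psi t"
    using CNJ_psi_norm_le[OF nontriv psi phi, of 1 M] that upper CNJ_phi CNJ_phistar by simp
  have ii: "CNJ (psi_norm psi :: 'a^'n \<Rightarrow> real) \<le> 1 / m^2 \<and> CNJ (psi_norm (psi_star psi) :: 'a^'n \<Rightarrow> real) \<le> 1 / m^2"
    if "\<forall>t\<in>Omega. psi t \<le> phi t"
    using CNJ_psi_norm_le[OF nontriv psi phi m, of 1] that lower CNJ_phi CNJ_phistar
    by (simp add: power_divide)
  have "M = (SUP t\<in>Omega. psi t / norm t)" "m = (INF t\<in>Omega. psi t / norm t)" if card: "CARD('n) = 2"
    unfolding M_def m_def using Psi_eq_norm_if_CNJ_psi_norm_eq_1[OF card nontriv phi CNJ_phi] by simp_all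
  with CNJ_psi_norm_ge_card_2[OF _ nontriv psi] i ii show ?thesis
    by (auto intro: antisym)
qed

end
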